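(* Let $d\ge 3$ be odd. If $w$ is a word over $A\cup A^{-1}$ that represents the identity element of $G_d$, then the exponent sum $|w|_{a_i}$ is $0$ for every $i\in\{1,\dots,d\}$.
   Context: Let $d\ge 3$, $X=\{1,\dots,d\}$, $T$ the $d$-regular rooted tree with vertex set $X^*$. $\mathrm{Aut}(T)$ is the group of root-preserving automorphisms with product left-to-right: $(gh)(u)=h(g(u))$. Sections $g|_u$ are defined by $g(uv)=g(u)\,g|_u(v)$; we write $g=(g|_1,\dots,g|_d)\lambda_g$ with $\lambda_g\in S_d$ the action on the first level; $e$ is the identity; $\overline{j}\in\{1,\dots,d\}$ denotes $j$ mod $d$. $G_d=\langle A\rangle\le\mathrm{Aut}(T)$, $A=\{a_1,\dots,a_d\}$, where $a_i$ acts on the first level as $(i\ \overline{i+1})$, with $a_i|_i=a_i$, $a_i|_{\overline{i+1}}=a_{\overline{i+1}}$, and $a_i|_x=e$ otherwise. For a word $w$ over $A\cup A^{-1}$ and $p\in A$, $|w|_p$ denotes the exponent sum of $p$ in $w$ (number of occurrences of $p$ minus number of occurrences of $p^{-1}$). *)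

theory Defs
  imports Main
begin

(* Vertices of the d-regular rooted tree: lists over X = {1..d}.
   Letters of words over A \<union> A^-1: pairs (i, b) with i \<in> {1..d};
   b = False means a_i, b = True means a_i^-1. *)

definition nxt :: "nat \<Rightarrow> nat \<Rightarrow> nat" where
  "nxt d i = (if i = d then 1 else i + 1)"

fun gen_act :: "nat \<Rightarrow> nat \<Rightarrow> nat list \<Rightarrow> nat list" where
  "gen_act d i [] = []"
| "gen_act d i (x # v) =
     (if x = i then nxt d i # gen_act d i v
      else if x = nxt d i then i # gen_act d (nxt d i) v
      else x # v)"

fun gen_inv_act :: "nat \<Rightarrow> nat \<Rightarrow> nat list \<Rightarrow> nat list" where
  "gen_inv_act d i [] = []"
| "gen_inv_act d i (y # w) =
     (if y = nxt d i then i # gen_inv_act d i w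
      else if y = i then nxt d i # gen_inv_act d (nxt d i) w
      else y # w)"

definition letter_act :: "nat \<Rightarrow> nat \<times> bool \<Rightarrow> nat list \<Rightarrow> nat list" where
  "letter_act d l = (if snd l then gen_inv_act d (fst l) else gen_act d (fst l))"

(* products are left-to-right: (gh)(u) = h(g(u)), so the first letter acts first *)
definition word_act :: "nat \<Rightarrow> (nat \<times> bool) list \<Rightarrow> nat list \<Rightarrow> nat list" where
  "word_act d w u = foldl (\<lambda>v l. letter_act d l v) u w"

definition is_word :: "nat \<Rightarrow> (nat \<times> bool) list \<Rightarrow> bool" where
  "is_word d w \<longleftrightarrow> (\<forall>l \<in> set w. fst l \<in> {1..d})"

definition represents_identity :: "nat \<Rightarrow> (nat \<times> bool) list \<Rightarrow> bool" where
  "represents_identity d w \<longleftrightarrow> (\<forall>u. set u \<subseteq> {1..d} \<longrightarrow> word_act d w u = u)"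

definition exp_sum :: "(nat \<times> bool) list \<Rightarrow> nat \<Rightarrow> int" where
  "exp_sum w i = int (length (filter (\<lambda>l. l = (i, False)) w))
               - int (length (filter (\<lambda>l. l = (i, True)) w))"

end

theory Submission
  imports Defs "HOL-Combinatorics.Transposition"
begin

text \<open>A word \<open>w\<close> for the identity has, at every first-level vertex \<open>x\<close>, a section word that
  again represents the identity and is no longer than \<open>w\<close>. Summing the exponent vectors of
  these sections gives \<open>(I + P) v\<close>, where \<open>v\<close> is the exponent vector of \<open>w\<close> and \<open>P\<close> the
  cyclic shift; for odd \<open>d\<close> the matrix \<open>I + P\<close> is invertible, so it suffices that all sections
  have vanishing exponent sums. By induction on the length this holds for every section
  shorter than \<open>w\<close>. A section of full length receives one letter from each letter of \<open>w\<close>: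
  an adjacent pair \<open>a\<^sub>i\<^sup>-\<^sup>1 a\<^sub>j\<close> in \<open>w\<close> then yields a cancelling pair \<open>a\<^sub>z\<^sup>-\<^sup>1 a\<^sub>z\<close>, and a word
  \<open>a\<^sub>j \<dots> a\<^sub>i\<^sup>-\<^sup>1\<close> a section \<open>a\<^sub>x \<dots> a\<^sub>x\<^sup>-\<^sup>1\<close> conjugate to a shorter relator. The remaining
  words have constant sign, and a nonempty relator of constant sign cannot exist: its nonempty
  sections have nonzero exponent sum, hence are of full length, which for \<open>d \<ge> 3\<close> forces it
  to be a power of a single \<open>a\<^sub>j\<close>, whose section at \<open>j\<close> involves two generators.\<close>

definition letter_perm :: "nat \<Rightarrow> nat \<times> bool \<Rightarrow> nat \<Rightarrow> nat" where
  "letter_perm d l = transpose (fst l) (nxt d (fst l))"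

text \<open>Sections of a single letter are empty words or single letters; that of \<open>a\<^sub>i\<^sup>-\<^sup>1\<close> at \<open>x\<close>
  is \<open>(a\<^sub>i|\<^bsub>a\<^sub>i\<^sup>-\<^sup>1(x)\<^esub>)\<^sup>-\<^sup>1\<close>.\<close>

definition letter_section :: "nat \<Rightarrow> nat \<times> bool \<Rightarrow> nat \<Rightarrow> (nat \<times> bool) list" where
  "letter_section d l x =
     (if x = fst l \<or> x = nxt d (fst l)
      then [(if snd l then letter_perm d l x else x, snd l)] else [])"

fun word_perm :: "nat \<Rightarrow> (nat \<times> bool) list \<Rightarrow> nat \<Rightarrow> nat" where
  "word_perm d [] x = x"
| "word_perm d (l # w) x = word_perm d w (letter_perm d l x)"

fun word_section :: "nat \<Rightarrow> (nat \<times> bool) list \<Rightarrow> nat \<Rightarrow> (nat \<times> bool) list" where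
  "word_section d [] x = []"
| "word_section d (l # w) x = letter_section d l x @ word_section d w (letter_perm d l x)"

lemma nxt_in_range: "i \<in> {1..d} \<Longrightarrow> nxt d i \<in> {1..d}"
  by (auto simp: nxt_def)

lemma nxt_neq: "d \<ge> 2 \<Longrightarrow> nxt d i \<noteq> i"
  by (auto simp: nxt_def)

lemma nxt_nxt_neq: "d \<ge> 3 \<Longrightarrow> i \<in> {1..d} \<Longrightarrow> nxt d (nxt d i) \<noteq> i"
  by (auto simp: nxt_def)

lemma word_act_Nil [simp]: "word_act d [] u = u"
  by (simp add: word_act_def)

lemma word_act_Cons: "word_act d (l # w) u = word_act d w (letter_act d l u)"
  by (simp add: word_act_def)

lemma word_act_append: "word_act d (p @ q) u = word_act d q (word_act d p u)"
  by (simp add: word_act_def)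

lemma letter_act_Cons:
  "letter_act d l (x # u) = letter_perm d l x # word_act d (letter_section d l x) u"
  by (cases l) (auto simp: letter_act_def letter_perm_def letter_section_def word_act_def)

lemma word_act_Cons_vertex:
  "word_act d w (x # u) = word_perm d w x # word_act d (word_section d w x) u"
  by (induction w arbitrary: x u) (simp_all add: word_act_Cons letter_act_Cons word_act_append)

lemma word_perm_append: "word_perm d (p @ q) x = word_perm d q (word_perm d p x)"
  by (induction p arbitrary: x) auto

lemma word_section_append:
  "word_section d (p @ q) x = word_section d p x @ word_section d q (word_perm d p x)"
  by (induction p arbitrary: x) auto

lemma length_letter_section_le: "length (letter_section d l x) \<le> 1"
  by (simp add: letter_section_def)

lemma length_word_section_le: "length (word_section d w x) \<le> length w"
proof (induction w arbitrary: x)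
  case (Cons l w)
  have "length (letter_section d l x) \<le> 1" by (rule length_letter_section_le)
  moreover have "length (word_section d w (letter_perm d l x)) \<le> length w" by (rule Cons.IH)
  ultimately show ?case by simp
qed simp

lemma letter_perm_in_range: "x \<in> {1..d} \<Longrightarrow> fst l \<in> {1..d} \<Longrightarrow> letter_perm d l x \<in> {1..d}"
  using nxt_in_range[of "fst l" d] by (simp add: letter_perm_def transpose_def)

lemma letter_perm_letter_perm [simp]: "letter_perm d l (letter_perm d l x) = x"
  by (simp add: letter_perm_def)

lemma is_word_letter_section:
  assumes "x \<in> {1..d}" "fst l \<in> {1..d}"
  shows "is_word d (letter_section d l x)"
proof -
  have "letter_perm d l x \<in> {1..d}" using letter_perm_in_range assms .
  then show ?thesis using assms(1) by (auto simp: letter_section_def is_word_def)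
qed

lemma is_word_append [simp]: "is_word d (p @ q) \<longleftrightarrow> is_word d p \<and> is_word d q"
  by (auto simp: is_word_def)

lemma is_word_Cons [simp]: "is_word d (l # w) \<longleftrightarrow> fst l \<in> {1..d} \<and> is_word d w"
  by (simp add: is_word_def)

lemma is_word_word_section: "is_word d w \<Longrightarrow> x \<in> {1..d} \<Longrightarrow> is_word d (word_section d w x)"
proof (induction w arbitrary: x)
  case (Cons l w)
  then show ?case using is_word_letter_section letter_perm_in_range by simp
qed simp

lemma represents_identity_word_perm:
  assumes "represents_identity d w" "x \<in> {1..d}"
  shows "word_perm d w x = x"
proof -
  have "word_act d w [x] = [x]" using assms by (simp add: represents_identity_def)
  then show ?thesis by (simp add: word_act_Cons_vertex)
qed

lemma represents_identity_word_section:
  assumes "represents_identity d w" "x \<in> {1..d}"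
  shows "represents_identity d (word_section d w x)"
  unfolding represents_identity_def
proof (intro allI impI)
  fix u assume "set u \<subseteq> {1..d}"
  then have "word_act d w (x # u) = x # u" using assms by (simp add: represents_identity_def)
  then show "word_act d (word_section d w x) u = u" by (simp add: word_act_Cons_vertex)
qed

lemma exp_sum_Nil [simp]: "exp_sum [] k = 0"
  by (simp add: exp_sum_def)

lemma exp_sum_append: "exp_sum (p @ q) k = exp_sum p k + exp_sum q k"
  by (simp add: exp_sum_def)

lemma exp_sum_Cons: "exp_sum (l # w) k = exp_sum [l] k + exp_sum w k"
  using exp_sum_append[of "[l]" w k] by simp

lemma exp_sum_single: "exp_sum [(i, b)] k = (if k = i then (if b then -1 else 1) else 0)"
  by (auto simp: exp_sum_def)

definition prv :: "nat \<Rightarrow> nat \<Rightarrow> nat" where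
  "prv d k = (if k = 1 then d else k - 1)"

lemma prv_eq_iff: "d \<ge> 2 \<Longrightarrow> k \<in> {1..d} \<Longrightarrow> i \<in> {1..d} \<Longrightarrow> prv d k = i \<longleftrightarrow> k = nxt d i"
  by (auto simp: prv_def nxt_def)

lemma sum_exp_sum_letter_section:
  assumes d: "d \<ge> 2" and i: "i \<in> {1..d}" and k: "k \<in> {1..d}"
  shows "(\<Sum>x\<in>{1..d}. exp_sum (letter_section d (i, b) x) k)
       = exp_sum [(i, b)] k + exp_sum [(i, b)] (prv d k)"
proof -
  let ?f = "\<lambda>x. exp_sum (letter_section d (i, b) x) k"
  have ne: "nxt d i \<noteq> i" using nxt_neq[OF d] .
  have "(\<Sum>x\<in>{1..d}. ?f x) = (\<Sum>x\<in>{i, nxt d i}. ?f x)"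
    using i nxt_in_range[OF i]
    by (intro sum.mono_neutral_right) (auto simp: letter_section_def)
  also have "\<dots> = ?f i + ?f (nxt d i)" using ne by simp
  also have "\<dots> = exp_sum [(i, b)] k + exp_sum [(i, b)] (prv d k)"
    using ne prv_eq_iff[OF d k i]
    by (cases b) (simp_all add: letter_section_def letter_perm_def exp_sum_single)
  finally show ?thesis .
qed

lemma sum_exp_sum_word_section:
  assumes d: "d \<ge> 2" and k: "k \<in> {1..d}" and "is_word d w"
  shows "(\<Sum>x\<in>{1..d}. exp_sum (word_section d w x) k) = exp_sum w k + exp_sum w (prv d k)"
  using \<open>is_word d w\<close>
proof (induction w)
  case Nil
  then show ?case by simp
next
  case (Cons l w)
  obtain i b where l: "l = (i, b)" by fastforce
  have i: "i \<in> {1..d}" and w: "is_word d w" using Cons.prems l by auto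
  have "(\<Sum>x\<in>{1..d}. exp_sum (word_section d w (letter_perm d l x)) k)
      = (\<Sum>x\<in>{1..d}. exp_sum (word_section d w x) k)"
    using i l letter_perm_in_range
    by (intro sum.reindex_bij_witness[where i = "letter_perm d l" and j = "letter_perm d l"]) auto
  then show ?case
    using Cons.IH[OF w] sum_exp_sum_letter_section[OF d i k, of b] l
    by (simp add: exp_sum_append sum.distrib exp_sum_Cons[of _ w])
qed

lemma cyclic_neighbour_sums_zero:
  fixes v :: "nat \<Rightarrow> int"
  assumes "odd d" and sums: "\<forall>k\<in>{1..d}. v k + v (prv d k) = 0"
  shows "\<forall>k\<in>{1..d}. v k = 0"
proof -
  have d: "d \<ge> 1" using \<open>odd d\<close> by (cases d) auto
  have alt: "v k = (-1) ^ (k - 1) * v 1" if "1 \<le> k" "k \<le> d" for k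
    using that
  proof (induction k)
    case (Suc k)
    show ?case
    proof (cases "k = 0")
      case False
      have "v (Suc k) + v k = 0"
        using sums[rule_format, of "Suc k"] Suc.prems False by (simp add: prv_def)
      moreover have "v k = (-1) ^ (k - 1) * v 1" using Suc False by simp
      ultimately show ?thesis using False by (cases k) simp_all
    qed simp
  qed simp
  have "v 1 + v d = 0" using sums[rule_format, of 1] d by (simp add: prv_def)
  moreover have "v d = v 1" using alt[of d] \<open>odd d\<close> d by (simp add: neg_one_even_power)
  ultimately show ?thesis using alt by simp
qed

lemma exp_sums_vanish_if_sections_vanish:
  assumes "d \<ge> 2" "odd d" "is_word d w"
    and "\<forall>x\<in>{1..d}. \<forall>k\<in>{1..d}. exp_sum (word_section d w x) k = 0"
  shows "\<forall>k\<in>{1..d}. exp_sum w k = 0"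
proof (rule cyclic_neighbour_sums_zero[OF \<open>odd d\<close>], intro ballI)
  fix k assume "k \<in> {1..d}"
  then have "exp_sum w k + exp_sum w (prv d k) = (\<Sum>x\<in>{1..d}. exp_sum (word_section d w x) k)"
    using sum_exp_sum_word_section assms(1,3) by simp
  also have "\<dots> = 0" using assms(4) \<open>k \<in> {1..d}\<close> by simp
  finally show "exp_sum w k + exp_sum w (prv d k) = 0" .
qed

lemma gen_act_gen_inv_act: "d \<ge> 2 \<Longrightarrow> gen_act d i (gen_inv_act d i u) = u"
  by (induction u arbitrary: i) (auto simp: nxt_neq nxt_neq[symmetric])

lemma set_gen_inv_act_subset:
  "set u \<subseteq> {1..d} \<Longrightarrow> i \<in> {1..d} \<Longrightarrow> set (gen_inv_act d i u) \<subseteq> {1..d}"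
  by (induction u arbitrary: i) (auto simp: nxt_def)

lemma represents_identity_cancel:
  assumes "d \<ge> 2" "represents_identity d (p @ [(z, True), (z, False)] @ q)"
  shows "represents_identity d (p @ q)"
  using assms
  by (simp add: represents_identity_def word_act_append word_act_Cons letter_act_def
      gen_act_gen_inv_act)

lemma represents_identity_conjugate:
  assumes d: "d \<ge> 2" and z: "z \<in> {1..d}"
    and rel: "represents_identity d ((z, False) # m @ [(z, True)])"
  shows "represents_identity d m"
  unfolding represents_identity_def
proof (intro allI impI)
  fix u assume u: "set u \<subseteq> {1..d}"
  have "set (gen_inv_act d z u) \<subseteq> {1..d}" using set_gen_inv_act_subset[OF u z] .
  then have "gen_inv_act d z (word_act d m (gen_act d z (gen_inv_act d z u))) = gen_inv_act d z u"
    using rel by (simp add: represents_identity_def word_act_append word_act_Cons letter_act_def)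
  then have "gen_act d z (gen_inv_act d z (word_act d m u)) = gen_act d z (gen_inv_act d z u)"
    using d by (simp add: gen_act_gen_inv_act)
  then show "word_act d m u = u" using d by (simp add: gen_act_gen_inv_act)
qed

definition full_section :: "nat \<Rightarrow> (nat \<times> bool) list \<Rightarrow> nat \<Rightarrow> bool" where
  "full_section d w x \<longleftrightarrow> length (word_section d w x) = length w"

lemma letter_section_eq_Nil_iff:
  "letter_section d l x = [] \<longleftrightarrow> x \<noteq> fst l \<and> x \<noteq> nxt d (fst l)"
  by (simp add: letter_section_def)

lemma letter_section_nonempty:
  "letter_section d l x \<noteq> [] \<Longrightarrow>
     letter_section d l x = [(if snd l then letter_perm d l x else x, snd l)]"
  by (simp add: letter_section_def split: if_split_asm)

lemma full_section_Cons:
  "full_section d (l # w) x \<longleftrightarrow>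
     letter_section d l x \<noteq> [] \<and> full_section d w (letter_perm d l x)"
  using length_word_section_le[of d w "letter_perm d l x"] length_letter_section_le[of d l x]
  by (auto simp: full_section_def le_Suc_eq)

lemma full_section_append:
  "full_section d (p @ q) x \<longleftrightarrow> full_section d p x \<and> full_section d q (word_perm d p x)"
  using length_word_section_le[of d p x] length_word_section_le[of d q "word_perm d p x"]
  by (auto simp: full_section_def word_section_append)

lemma full_section_cancel_pair:
  assumes "full_section d (p @ [(i, True), (j, False)] @ q) x"
  obtains p' q' z where
    "word_section d (p @ [(i, True), (j, False)] @ q) x = p' @ [(z, True), (z, False)] @ q'"
proof -
  let ?y = "word_perm d p x"
  have "full_section d ([(i, True), (j, False)] @ q) ?y"
    using assms full_section_append[of d p "[(i, True), (j, False)] @ q" x] by blast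
  then have "full_section d [(i, True), (j, False)] ?y"
    using full_section_append[of d "[(i, True), (j, False)]" q ?y] by blast
  then have "letter_section d (i, True) ?y \<noteq> []"
    "letter_section d (j, False) (letter_perm d (i, True) ?y) \<noteq> []"
    by (simp_all add: full_section_Cons)
  then obtain z where "word_section d [(i, True), (j, False)] ?y = [(z, True), (z, False)]"
    by (simp add: letter_section_nonempty)
  moreover have "word_section d (p @ [(i, True), (j, False)] @ q) x
      = word_section d p x @ word_section d [(i, True), (j, False)] ?y
        @ word_section d q (word_perm d [(i, True), (j, False)] ?y)"
    by (simp only: word_section_append)
  ultimately show ?thesis
    using that by simp
qed

lemma full_section_conjugate:
  assumes full: "full_section d ((j, False) # m @ [(i, True)]) x"
    and fixed: "word_perm d ((j, False) # m @ [(i, True)]) x = x"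
  obtains m' where "word_section d ((j, False) # m @ [(i, True)]) x = (x, False) # m' @ [(x, True)]"
proof -
  let ?y = "word_perm d m (letter_perm d (j, False) x)"
  have "letter_section d (j, False) x \<noteq> []" "letter_section d (i, True) ?y \<noteq> []"
    using full by (simp_all add: full_section_Cons full_section_append)
  moreover have "letter_perm d (i, True) ?y = x"
    using fixed by (simp add: word_perm_append)
  ultimately have "letter_section d (j, False) x = [(x, False)]"
    "letter_section d (i, True) ?y = [(x, True)]"
    by (simp_all add: letter_section_nonempty)
  then show ?thesis
    using that by (simp add: word_section_append)
qed

lemma word_section_same_sign:
  "\<forall>l\<in>set w. snd l = b \<Longrightarrow> \<forall>l\<in>set (word_section d w x). snd l = b"
  by (induction w arbitrary: x) (auto simp: letter_section_def)

lemma exp_sum_same_sign_nonzero: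
  assumes "w \<noteq> []" "\<forall>l\<in>set w. snd l = b"
  shows "exp_sum w (fst (hd w)) \<noteq> 0"
proof -
  obtain j w' where w: "w = (j, b) # w'" using assms by (cases w) auto
  have "filter (\<lambda>l. l = (j, \<not> b)) w = []" using assms(2) by (auto simp: filter_empty_conv)
  then show ?thesis using w by (cases b) (simp_all add: exp_sum_def)
qed

definition exp_sums_vanish_below :: "nat \<Rightarrow> nat \<Rightarrow> bool" where
  "exp_sums_vanish_below d n \<longleftrightarrow>
     (\<forall>w. length w < n \<longrightarrow> is_word d w \<longrightarrow> represents_identity d w \<longrightarrow>
        (\<forall>k\<in>{1..d}. exp_sum w k = 0))"

lemma full_section_if_same_sign:
  assumes below: "exp_sums_vanish_below d (length w)"
    and w: "is_word d w" and rel: "represents_identity d w" and sign: "\<forall>l\<in>set w. snd l = b"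
    and x: "x \<in> {1..d}" and ne: "word_section d w x \<noteq> []"
  shows "full_section d w x"
proof (rule ccontr)
  let ?s = "word_section d w x"
  assume "\<not> full_section d w x"
  then have "length ?s < length w"
    using length_word_section_le[of d w x] by (simp add: full_section_def)
  then have "\<forall>k\<in>{1..d}. exp_sum ?s k = 0"
    using below is_word_word_section[OF w x] represents_identity_word_section[OF rel x]
    by (simp add: exp_sums_vanish_below_def)
  moreover have "fst (hd ?s) \<in> {1..d}"
    using is_word_word_section[OF w x] ne by (simp add: is_word_def)
  ultimately show False
    using exp_sum_same_sign_nonzero[OF ne word_section_same_sign[OF sign]] by blast
qed

text \<open>For \<open>d \<ge> 3\<close> the transpositions \<open>(j j+1)\<close> and \<open>(i i+1)\<close> move the same pair of
  points only if \<open>i = j\<close>.\<close>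

lemma single_generator_if_two_full_sections:
  assumes d: "d \<ge> 3" and j: "j \<in> {1..d}"
  shows "is_word d w \<Longrightarrow> {x, y} = {j, nxt d j} \<Longrightarrow> full_section d w x \<Longrightarrow> full_section d w y
    \<Longrightarrow> \<forall>l\<in>set w. fst l = j"
proof (induction w arbitrary: x y)
  case (Cons l w)
  obtain i b where l: "l = (i, b)" by fastforce
  have i: "i \<in> {1..d}" using Cons.prems(1) l by simp
  have "x \<in> {i, nxt d i}" "y \<in> {i, nxt d i}"
    using Cons.prems(3,4) l by (auto simp: full_section_Cons letter_section_eq_Nil_iff)
  moreover have "nxt d j \<noteq> j" "nxt d i \<noteq> i" using nxt_neq d by simp_all
  moreover from this(1) have "x \<noteq> y" using Cons.prems(2) by (auto simp: doubleton_eq_iff)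
  ultimately have "{j, nxt d j} = {i, nxt d i}"
    using Cons.prems(2) by auto
  then have ij: "i = j"
    using nxt_nxt_neq[OF d i] nxt_neq[of d j] d by (auto simp: doubleton_eq_iff)
  have "{letter_perm d l x, letter_perm d l y} = {j, nxt d j}"
    using Cons.prems(2) ij l by (auto simp: letter_perm_def doubleton_eq_iff)
  then have "\<forall>l\<in>set w. fst l = j"
    using Cons.IH Cons.prems(1,3,4) by (simp add: full_section_Cons)
  then show ?case using ij l by simp
qed simp

lemma same_sign_relator_single_generator:
  assumes d: "d \<ge> 3" and below: "exp_sums_vanish_below d (length w)"
    and w: "is_word d w" and rel: "represents_identity d w" and sign: "\<forall>l\<in>set w. snd l = b"
    and w_eq: "w = (j, b) # w'"
  shows "\<forall>l\<in>set w. fst l = j"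
proof -
  have j: "j \<in> {1..d}" using w w_eq by simp
  have "word_section d w j \<noteq> []" "word_section d w (nxt d j) \<noteq> []"
    using w_eq by (simp_all add: letter_section_def)
  then have "full_section d w j" "full_section d w (nxt d j)"
    using full_section_if_same_sign[OF below w rel sign] j nxt_in_range[OF j] by simp_all
  then show ?thesis
    using single_generator_if_two_full_sections[OF d j w] by blast
qed

lemma same_sign_relator_Nil:
  assumes d: "d \<ge> 3" and below: "exp_sums_vanish_below d (length w)"
    and w: "is_word d w" and rel: "represents_identity d w" and sign: "\<forall>l\<in>set w. snd l = b"
  shows "w = []"
proof (rule ccontr)
  assume "w \<noteq> []"
  then obtain j w' where w_eq: "w = (j, b) # w'" using sign by (cases w) auto
  have j: "j \<in> {1..d}" using w w_eq by simp
  have ne: "nxt d j \<noteq> j" using nxt_neq d by simp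
  have gen: "\<forall>l\<in>set w. fst l = j"
    using same_sign_relator_single_generator[OF d below w rel sign w_eq] .
  have "w' \<noteq> []"
  proof
    assume "w' = []"
    then have "word_perm d w j = nxt d j" using w_eq by (simp add: letter_perm_def)
    then show False using represents_identity_word_perm[OF rel j] ne by simp
  qed
  then obtain l r where lr: "w' = l # r" by (cases w') auto
  then have "l \<in> set w" using w_eq by simp
  then have "fst l = j" "snd l = b" using gen sign by blast+
  then have "l = (j, b)" by (simp add: prod_eq_iff)
  then have w_eq2: "w = (j, b) # (j, b) # r" using w_eq lr by simp
  let ?a = "if b then nxt d j else j" and ?c = "if b then j else nxt d j"
  have t: "word_section d w j = (?a, b) # (?c, b) # word_section d r j"
    using w_eq2 ne by (cases b) (simp_all add: letter_section_def letter_perm_def)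
  let ?t = "word_section d w j"
  have "full_section d w j"
    using full_section_if_same_sign[OF below w rel sign j] t by simp
  then have "exp_sums_vanish_below d (length ?t)"
    using below by (simp add: full_section_def)
  then have "\<forall>l\<in>set ?t. fst l = ?a"
    using same_sign_relator_single_generator[OF d _ is_word_word_section[OF w j]
        represents_identity_word_section[OF rel j] word_section_same_sign[OF sign] t]
    by blast
  then show False using t ne by (cases b) simp_all
qed

lemma sign_pattern:
  "(\<exists>p i j q. w = p @ [(i, True), (j, False)] @ q) \<or>
   (\<exists>j m i. w = (j, False) # m @ [(i, True)]) \<or>
   (\<exists>b. \<forall>l\<in>set w. snd l = b)"
proof (induction w)
  case (Cons l w)
  obtain i b where l: "l = (i, b)" by fastforce
  from Cons.IH show ?case
  proof (elim disjE exE)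
    fix p i' j q assume "w = p @ [(i', True), (j, False)] @ q"
    then have "l # w = (l # p) @ [(i', True), (j, False)] @ q" by simp
    then show ?case by blast
  next
    fix j m i' assume w: "w = (j, False) # m @ [(i', True)]"
    show ?case
    proof (cases b)
      case True
      then have "l # w = [] @ [(i, True), (j, False)] @ m @ [(i', True)]" using w l by simp
      then show ?thesis by blast
    next
      case False
      then have "l # w = (i, False) # ((j, False) # m) @ [(i', True)]" using w l by simp
      then show ?thesis by blast
    qed
  next
    fix b' assume sign: "\<forall>l\<in>set w. snd l = b'"
    consider "w = [] \<or> b = b'" | "w \<noteq> []" "b" "\<not> b'" | "w \<noteq> []" "\<not> b" "b'" by blast
    then show ?case
    proof cases
      case 1
      then have "\<forall>l'\<in>set (l # w). snd l' = b" using sign l by auto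
      then show ?thesis by blast
    next
      case 2
      then obtain j w' where "w = (j, False) # w'" using sign by (cases w) auto
      then have "l # w = [] @ [(i, True), (j, False)] @ w'" using l 2 by simp
      then show ?thesis by blast
    next
      case 3
      then have "snd (last w) = True" using sign by simp
      then have "w = butlast w @ [(fst (last w), True)]"
        using 3 append_butlast_last_id[of w] by (metis prod.collapse)
      then have "l # w = (i, False) # butlast w @ [(fst (last w), True)]" using l 3 by simp
      then show ?thesis by blast
    qed
  qed
qed simp

lemma full_section_exp_sums_vanish:
  assumes d: "d \<ge> 3" and below: "exp_sums_vanish_below d (length w)"
    and w: "is_word d w" and rel: "represents_identity d w" and x: "x \<in> {1..d}"
    and full: "full_section d w x"
  shows "\<forall>k\<in>{1..d}. exp_sum (word_section d w x) k = 0"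
proof -
  let ?s = "word_section d w x"
  have d2: "d \<ge> 2" using d by simp
  have s: "is_word d ?s" "represents_identity d ?s" "length ?s = length w"
    using is_word_word_section[OF w x] represents_identity_word_section[OF rel x] full
    by (simp_all add: full_section_def)
  from sign_pattern[of w] show ?thesis
  proof (elim disjE exE)
    fix p i j q assume "w = p @ [(i, True), (j, False)] @ q"
    then obtain p' q' z where s_eq: "?s = p' @ [(z, True), (z, False)] @ q'"
      using full full_section_cancel_pair by metis
    have "represents_identity d (p' @ q')"
      using represents_identity_cancel[OF d2] s(2) s_eq by metis
    moreover have "is_word d (p' @ q')" "length (p' @ q') < length w"
      using s(1,3) s_eq by auto
    ultimately have "\<forall>k\<in>{1..d}. exp_sum (p' @ q') k = 0"
      using below by (simp add: exp_sums_vanish_below_def)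
    moreover have "exp_sum ?s k = exp_sum (p' @ q') k" for k
      using s_eq by (simp add: exp_sum_def)
    ultimately show ?thesis by simp
  next
    fix j m i assume "w = (j, False) # m @ [(i, True)]"
    then obtain m' where s_eq: "?s = (x, False) # m' @ [(x, True)]"
      using full represents_identity_word_perm[OF rel x] full_section_conjugate by metis
    have "represents_identity d m'"
      using represents_identity_conjugate[OF d2 x] s(2) s_eq by metis
    moreover have "is_word d m'" "length m' < length w"
      using s(1,3) s_eq by auto
    ultimately have "\<forall>k\<in>{1..d}. exp_sum m' k = 0"
      using below by (simp add: exp_sums_vanish_below_def)
    moreover have "exp_sum ?s k = exp_sum m' k" for k
      using s_eq by (simp add: exp_sum_def)
    ultimately show ?thesis by simp
  next
    fix b assume "\<forall>l\<in>set w. snd l = b"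
    then have "w = []" using same_sign_relator_Nil[OF d below w rel] by blast
    then show ?thesis by simp
  qed
qed

lemma section_exp_sums_vanish:
  assumes d: "d \<ge> 3" and below: "exp_sums_vanish_below d (length w)"
    and w: "is_word d w" and rel: "represents_identity d w" and x: "x \<in> {1..d}"
  shows "\<forall>k\<in>{1..d}. exp_sum (word_section d w x) k = 0"
proof (cases "full_section d w x")
  case True
  then show ?thesis using full_section_exp_sums_vanish[OF assms] by blast
next
  case False
  then have "length (word_section d w x) < length w"
    using length_word_section_le[of d w x] by (simp add: full_section_def)
  then show ?thesis
    using below is_word_word_section[OF w x] represents_identity_word_section[OF rel x]
    by (simp add: exp_sums_vanish_below_def)
qed

lemma exp_sums_vanish_below_Suc:
  assumes "d \<ge> 3" "odd d" "exp_sums_vanish_below d n"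
  shows "exp_sums_vanish_below d (Suc n)"
  unfolding exp_sums_vanish_below_def
proof (intro allI impI)
  fix w assume w: "length w < Suc n" "is_word d w" "represents_identity d w"
  then have "exp_sums_vanish_below d (length w)"
    using assms(3) by (simp add: exp_sums_vanish_below_def)
  then have "\<forall>x\<in>{1..d}. \<forall>k\<in>{1..d}. exp_sum (word_section d w x) k = 0"
    using section_exp_sums_vanish[OF assms(1) _ w(2,3)] by blast
  then show "\<forall>k\<in>{1..d}. exp_sum w k = 0"
    using exp_sums_vanish_if_sections_vanish[of d w] assms(1,2) w(2) by simp
qed

theorem theorem4p1:
  fixes d :: nat and w :: "(nat \<times> bool) list"
  assumes "d \<ge> 3" and "odd d"
    and "is_word d w"
    and "represents_identity d w"
  shows "\<forall>i \<in> {1..d}. exp_sum w i = 0"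
proof -
  have "exp_sums_vanish_below d n" for n
  proof (induction n)
    case 0
    then show ?case by (simp add: exp_sums_vanish_below_def)
  next
    case (Suc n)
    then show ?case using exp_sums_vanish_below_Suc assms(1,2) by blast
  qed
  then show ?thesis
    using assms(3,4) unfolding exp_sums_vanish_below_def by (meson lessI)
qed

end
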